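(* Let $m\ge 2$ be even and $n\ge 2$. Let $c=(c_1,\dots,c_n)^T,\ d=(d_1,\dots,d_n)^T\in\mathbb{R}^n$ with $d_i\neq 0$ for all $i\in[n]$, and assume $c_{i_1}+\cdots+c_{i_m}\neq 0$ for all $i_1,\dots,i_m\in[n]$. Let $\mathcal{C}$ be the generalized Cauchy tensor of order $m$ and dimension $n$ with generating vectors $c,d$. Then the following are equivalent: (i) $\mathcal{C}$ is a completely decomposable tensor; (ii) $\mathcal{C}$ is an SOS tensor; (iii) $\mathcal{C}$ is positive semi-definite; (iv) $c_i>0$ for all $i\in[n]$.
   Context: $[n]=\{1,\dots,n\}$. For a real order-$m$ dimension-$n$ tensor $\mathcal{A}=(a_{i_1\cdots i_m})$ and $x\in\mathbb{R}^n$, $\mathcal{A}x^m=\sum_{i_1,\dots,i_m=1}^n a_{i_1\cdots i_m}x_{i_1}\cdots x_{i_m}$. The generalized Cauchy tensor with generating vectors $c,d\in\mathbb{R}^n$ is $\mathcal{C}=(c_{i_1\cdots i_m})$ with $c_{i_1\cdots i_m}=\frac{d_{i_1}d_{i_2}\cdots d_{i_m}}{c_{i_1}+c_{i_2}+\cdots+c_{i_m}}$. A tensor $\mathcal{A}$ (of even order $m$) is positive semi-definite if $\mathcal{A}x^m\ge 0$ for all $x\in\mathbb{R}^n$. A symmetric tensor $\mathcal{A}$ of even order $m=2k$ is an SOS tensor if the polynomial $x\mapsto\mathcal{A}x^m$ is a sum of squares of polynomials of degree $k$. $\mathcal{A}$ is completely decomposable if there exist vectors $x_1,\dots,x_r\in\mathbb{R}^n$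 with $\mathcal{A}=\sum_{j=1}^r x_j^{m}$, where $x^m$ denotes the rank-one tensor with entries $x_{i_1}x_{i_2}\cdots x_{i_m}$. *)

theory Defs
  imports "HOL-Analysis.Analysis" "HOL-Library.Multiset"
begin

text \<open>A real tensor of order m and dimension n = CARD('n) is represented as a function
  on index lists; only lists of length m are meaningful.\<close>
type_synonym 'n tensor = "'n list \<Rightarrow> real"

definition index_tuples :: "nat \<Rightarrow> 'n list set" where
  "index_tuples m = {is. length is = m}"

definition tensor_form :: "nat \<Rightarrow> 'n::finite tensor \<Rightarrow> real ^ 'n \<Rightarrow> real" where
  "tensor_form m A x = (\<Sum>is\<in>index_tuples m. A is * (\<Prod>t<m. x $ (is ! t)))"

definition gen_cauchy_tensor :: "real ^ 'n \<Rightarrow> real ^ 'n \<Rightarrow> 'n tensor" where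
  "gen_cauchy_tensor c d = (\<lambda>is. (\<Prod>t<length is. d $ (is ! t)) / (\<Sum>t<length is. c $ (is ! t)))"

definition symmetric_tensor :: "nat \<Rightarrow> 'n tensor \<Rightarrow> bool" where
  "symmetric_tensor m A \<longleftrightarrow>
     (\<forall>is js. length is = m \<longrightarrow> mset js = mset is \<longrightarrow> A js = A is)"

definition psd_tensor :: "nat \<Rightarrow> 'n::finite tensor \<Rightarrow> bool" where
  "psd_tensor m A \<longleftrightarrow> (\<forall>x. tensor_form m A x \<ge> 0)"

text \<open>Real polynomials in n variables of (total) degree at most k, given by a
  coefficient function on exponent vectors.\<close>
definition monomials_le :: "nat \<Rightarrow> ('n::finite \<Rightarrow> nat) set" where
  "monomials_le k = {\<alpha>. (\<Sum>i\<in>UNIV. \<alpha> i) \<le> k}"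

definition poly_eval :: "nat \<Rightarrow> (('n::finite \<Rightarrow> nat) \<Rightarrow> real) \<Rightarrow> real ^ 'n \<Rightarrow> real" where
  "poly_eval k a x = (\<Sum>\<alpha>\<in>monomials_le k. a \<alpha> * (\<Prod>i\<in>UNIV. (x $ i) ^ (\<alpha> i)))"

definition sos_tensor :: "nat \<Rightarrow> 'n::finite tensor \<Rightarrow> bool" where
  "sos_tensor m A \<longleftrightarrow> symmetric_tensor m A \<and>
     (\<exists>ps :: (('n \<Rightarrow> nat) \<Rightarrow> real) list.
        \<forall>x. tensor_form m A x = (\<Sum>p\<leftarrow>ps. (poly_eval (m div 2) p x)^2))"

definition completely_decomposable :: "nat \<Rightarrow> 'n::finite tensor \<Rightarrow> bool" where
  "completely_decomposable m A \<longleftrightarrow>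
     (\<exists>xs :: (real ^ 'n) list. \<forall>is\<in>index_tuples m.
        A is = (\<Sum>v\<leftarrow>xs. \<Prod>t<m. v $ (is ! t)))"

end

theory Submission
  imports Defs "HOL-Real_Asymp.Real_Asymp"
begin

text \<open>
  Writing \<open>m = 2k\<close>, the form of a rank-one tensor \<open>v\<^sup>m\<close> is \<open>((v \<bullet> x)\<^sup>k)\<^sup>2\<close>, so completely
  decomposable tensors are SOS, and SOS tensors are positive semi-definite. At the \<open>i\<close>-th unit
  vector the form of the Cauchy tensor is \<open>d\<^sub>i\<^sup>m / (m c\<^sub>i)\<close>, so positive semi-definiteness forces
  \<open>c\<^sub>i > 0\<close>.

  Conversely, if all \<open>c\<^sub>i > 0\<close>, then \<open>1 / (c\<^sub>i\<^sub>1 + ... + c\<^sub>i\<^sub>m)\<close> is the integral over \<open>s \<ge> 0\<close> of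
  \<open>exp (-s c\<^sub>i\<^sub>1) \<cdots> exp (-s c\<^sub>i\<^sub>m)\<close>, so Riemann sums exhibit the Cauchy tensor as a limit of
  nonnegative combinations of the rank-one tensors \<open>(d\<^sub>j exp (-s c\<^sub>j))\<^sub>j\<^sup>m\<close>. By Caratheodory's
  theorem for cones each combination is a sum of \<open>R\<close> such powers, \<open>R\<close> the number of entries.
  Their diagonal entries \<open>\<Sum>\<^sub>j (v\<^sub>j)\<^sub>i\<^sup>m\<close> converge, so the vectors \<open>v\<^sub>j\<close> stay bounded, and a
  convergent subsequence gives a complete decomposition of the limit.
\<close>

definition rank_one_tensor :: "nat \<Rightarrow> real ^ 'n \<Rightarrow> 'n tensor" where
  "rank_one_tensor m v is = (\<Prod>t<m. v $ (is ! t))"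

lemma rank_one_tensor_scaleR: "rank_one_tensor m (r *\<^sub>R v) is = r ^ m * rank_one_tensor m v is"
  by (simp add: rank_one_tensor_def prod.distrib)

lemma rank_one_tensor_zero: "m > 0 \<Longrightarrow> rank_one_tensor m 0 is = 0"
  by (simp add: rank_one_tensor_def)

lemma rank_one_tensor_replicate [simp]: "rank_one_tensor m v (replicate m i) = (v $ i) ^ m"
  by (simp add: rank_one_tensor_def)

lemma completely_decomposable_iff_rank_one:
  "completely_decomposable m A \<longleftrightarrow>
     (\<exists>xs. \<forall>is\<in>index_tuples m. A is = (\<Sum>v\<leftarrow>xs. rank_one_tensor m v is))"
  by (simp add: completely_decomposable_def rank_one_tensor_def)

lemma finite_index_tuples: "finite (index_tuples m :: 'n::finite list set)"
  unfolding index_tuples_def by (rule finite_list_length)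

lemma index_tuples_Suc:
  "index_tuples (Suc k) = (\<lambda>(i, is). i # is) ` (UNIV \<times> index_tuples k)"
  unfolding index_tuples_def by (auto simp: image_iff length_Suc_conv)

lemma power_sum_eq_sum_index_tuples:
  fixes y :: "'n::finite \<Rightarrow> real"
  shows "(\<Sum>i\<in>UNIV. y i) ^ k = (\<Sum>is\<in>index_tuples k. \<Prod>t<k. y (is ! t))"
proof (induction k)
  case 0
  then show ?case by (simp add: index_tuples_def)
next
  case (Suc k)
  have inj: "inj_on (\<lambda>(i, is). i # is) (UNIV \<times> index_tuples k)"
    by (auto simp: inj_on_def)
  have "(\<Sum>is\<in>index_tuples (Suc k). \<Prod>t<Suc k. y (is ! t))
      = (\<Sum>(i, is)\<in>UNIV \<times> index_tuples k. y i * (\<Prod>t<k. y (is ! t)))"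
    unfolding index_tuples_Suc sum.reindex[OF inj]
    by (simp del: prod.lessThan_Suc add: prod.lessThan_Suc_shift case_prod_beta)
  also have "\<dots> = (\<Sum>i\<in>UNIV. y i) * (\<Sum>is\<in>index_tuples k. \<Prod>t<k. y (is ! t))"
    by (simp add: sum.cartesian_product[symmetric] sum_product)
  finally show ?case using Suc by simp
qed

lemma tensor_form_rank_one_tensor:
  "tensor_form m (rank_one_tensor m v) x = (\<Sum>i\<in>UNIV. v $ i * x $ i) ^ m"
  by (simp add: tensor_form_def rank_one_tensor_def power_sum_eq_sum_index_tuples prod.distrib)

lemma tensor_form_cong:
  "(\<And>is. is \<in> index_tuples m \<Longrightarrow> A is = B is) \<Longrightarrow> tensor_form m A x = tensor_form m B x"
  unfolding tensor_form_def by (rule sum.cong) auto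

lemma tensor_form_sum_list:
  "tensor_form m (\<lambda>is. \<Sum>v\<leftarrow>xs. f v is) x = (\<Sum>v\<leftarrow>xs. tensor_form m (f v) x)"
  by (induction xs) (simp_all add: tensor_form_def sum.distrib distrib_right)

lemma tensor_form_axis: "tensor_form m A (axis i (1::real)) = A (replicate m i)"
proof -
  have "(\<Prod>t<m. axis i (1::real) $ (is ! t)) = (if is = replicate m i then 1 else 0)"
    if "is \<in> index_tuples m" for "is"
  proof (cases "is = replicate m i")
    case False
    moreover have "length is = m" using that by (simp add: index_tuples_def)
    ultimately obtain t where "t < m" "is ! t \<noteq> i"
      by (metis replicate_eqI in_set_conv_nth)
    then have "(\<Prod>t<m. axis i (1::real) $ (is ! t)) = 0"
      by (intro prod_zero) (auto simp: axis_def intro!: bexI[of _ t])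
    with False show ?thesis by simp
  qed (simp add: axis_def)
  then have "tensor_form m A (axis i (1::real))
      = (\<Sum>is\<in>index_tuples m. if is = replicate m i then A is else 0)"
    unfolding tensor_form_def by (intro sum.cong) auto
  also have "\<dots> = A (replicate m i)"
    by (subst sum.delta[OF finite_index_tuples]) (simp add: index_tuples_def)
  finally show ?thesis .
qed

lemma prod_nth_eq_prod_power_count:
  fixes x :: "'n::finite \<Rightarrow> real"
  shows "(\<Prod>t<length is. x (is ! t)) = (\<Prod>i\<in>UNIV. x i ^ count (mset is) i)"
proof (induction "is")
  case Nil
  then show ?case by simp
next
  case (Cons a xs)
  have "(\<Prod>i\<in>UNIV. x i ^ count (mset (a # xs)) i)
      = (\<Prod>i\<in>UNIV. (if i = a then x i else 1) * x i ^ count (mset xs) i)"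
    by (rule prod.cong) auto
  also have "\<dots> = x a * (\<Prod>i\<in>UNIV. x i ^ count (mset xs) i)"
    by (simp add: prod.distrib)
  finally show ?case
    using Cons by (simp del: prod.lessThan_Suc add: prod.lessThan_Suc_shift)
qed

lemma sum_count_eq_size: "(\<Sum>i\<in>(UNIV::'n::finite set). count M i) = size M"
  by (simp add: size_multiset_overloaded_eq sum.mono_neutral_right count_eq_zero_iff)

lemma finite_monomials_le: "finite (monomials_le k :: ('n::finite \<Rightarrow> nat) set)"
proof (rule finite_subset)
  show "monomials_le k \<subseteq> {f :: 'n \<Rightarrow> nat. \<forall>x. f x \<in> {..k}}"
  proof
    fix f :: "'n \<Rightarrow> nat"
    assume "f \<in> monomials_le k"
    then have "f x \<le> k" for x
      unfolding monomials_le_def using member_le_sum[of x UNIV f] by simp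
    then show "f \<in> {f. \<forall>x. f x \<in> {..k}}" by simp
  qed
  show "finite {f :: 'n \<Rightarrow> nat. \<forall>x. f x \<in> {..k}}"
    using finite_PiE[of "UNIV::'n set" "\<lambda>_. {..k}"] by (simp add: PiE_def Pi_def)
qed

lemma power_linear_form_eq_poly_eval:
  fixes v :: "real ^ 'n::finite"
  shows "\<exists>p. \<forall>x. (\<Sum>i\<in>UNIV. v $ i * x $ i) ^ k = poly_eval k p x"
proof -
  define \<alpha> where "\<alpha> is = (\<lambda>i. count (mset is) i)" for "is" :: "'n list"
  define p where "p \<beta> = (\<Sum>is\<in>{is\<in>index_tuples k. \<alpha> is = \<beta>}. \<Prod>t<k. v $ (is ! t))" for \<beta>
  have \<alpha>_image: "\<alpha> ` index_tuples k \<subseteq> monomials_le k"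
    by (auto simp: \<alpha>_def monomials_le_def index_tuples_def sum_count_eq_size)
  have "(\<Sum>i\<in>UNIV. v $ i * x $ i) ^ k = poly_eval k p x" for x
  proof -
    have "(\<Sum>i\<in>UNIV. v $ i * x $ i) ^ k
        = (\<Sum>is\<in>index_tuples k. (\<Prod>t<k. v $ (is ! t)) * (\<Prod>i\<in>UNIV. (x $ i) ^ \<alpha> is i))"
      unfolding power_sum_eq_sum_index_tuples prod.distrib
      by (rule sum.cong) (auto simp: index_tuples_def \<alpha>_def
            prod_nth_eq_prod_power_count[where x="\<lambda>i. x $ i", symmetric])
    also have "\<dots> = (\<Sum>\<beta>\<in>monomials_le k. \<Sum>is\<in>{is\<in>index_tuples k. \<alpha> is = \<beta>}.
                 (\<Prod>t<k. v $ (is ! t)) * (\<Prod>i\<in>UNIV. (x $ i) ^ \<alpha> is i))"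
      by (rule sum.group[symmetric, OF finite_index_tuples finite_monomials_le \<alpha>_image])
    also have "\<dots> = poly_eval k p x"
      unfolding poly_eval_def p_def by (rule sum.cong[OF refl]) (simp add: sum_distrib_right)
    finally show ?thesis .
  qed
  then show ?thesis by blast
qed

lemma completely_decomposable_imp_sos_tensor:
  fixes A :: "'n::finite tensor"
  assumes "even m" and "symmetric_tensor m A" and "completely_decomposable m A"
  shows "sos_tensor m A"
proof -
  obtain xs where xs: "\<And>is. is \<in> index_tuples m \<Longrightarrow> A is = (\<Sum>v\<leftarrow>xs. rank_one_tensor m v is)"
    using assms(3) unfolding completely_decomposable_iff_rank_one by blast
  define k where "k = m div 2"
  have "\<exists>P. \<forall>(v :: real ^ 'n) (x :: real ^ 'n). (\<Sum>i\<in>UNIV. v $ i * x $ i) ^ k = poly_eval k (P v) x"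
    using power_linear_form_eq_poly_eval by (intro choice allI)
  then obtain P where P: "\<And>v (x :: real ^ 'n). (\<Sum>i\<in>UNIV. v $ i * x $ i) ^ k = poly_eval k (P v) x"
    by blast
  have "tensor_form m A x = (\<Sum>v\<leftarrow>xs. (poly_eval k (P v) x)\<^sup>2)" for x
  proof -
    have "tensor_form m A x = (\<Sum>v\<leftarrow>xs. (\<Sum>i\<in>UNIV. v $ i * x $ i) ^ (k * 2))"
      using assms(1) by (simp add: tensor_form_cong[OF xs] tensor_form_sum_list
          tensor_form_rank_one_tensor k_def)
    then show ?thesis by (simp add: power_mult P)
  qed
  then show ?thesis
    unfolding sos_tensor_def using assms(2) by (auto intro!: exI[of _ "map P xs"] simp: o_def k_def)
qed

lemma sos_tensor_imp_psd_tensor: "sos_tensor m A \<Longrightarrow> psd_tensor m A"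
  unfolding sos_tensor_def psd_tensor_def by (auto intro!: sum_list_nonneg)

lemma symmetric_gen_cauchy_tensor: "symmetric_tensor m (gen_cauchy_tensor c d)"
proof -
  have "(\<Prod>t<length xs. f (xs ! t)) = prod_mset (image_mset f (mset xs))"
    and "(\<Sum>t<length xs. f (xs ! t)) = sum_mset (image_mset f (mset xs))"
    for xs :: "'n list" and f :: "'n \<Rightarrow> real"
    by (induction xs) (simp_all del: prod.lessThan_Suc sum.lessThan_Suc
        add: prod.lessThan_Suc_shift sum.lessThan_Suc_shift)
  then show ?thesis
    unfolding symmetric_tensor_def gen_cauchy_tensor_def by metis
qed

lemma psd_gen_cauchy_tensor_imp_pos:
  fixes c d :: "real ^ 'n::finite"
  assumes "even m" "m > 0" and "d $ i \<noteq> 0"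
    and "\<forall>is\<in>index_tuples m. (\<Sum>t<m. c $ (is ! t)) \<noteq> 0"
    and "psd_tensor m (gen_cauchy_tensor c d)"
  shows "c $ i > 0"
proof -
  have "0 \<le> tensor_form m (gen_cauchy_tensor c d) (axis i 1)"
    using assms(5) by (simp add: psd_tensor_def)
  also have "\<dots> = (d $ i) ^ m / (real m * c $ i)"
    by (simp add: tensor_form_axis gen_cauchy_tensor_def)
  finally have "0 \<le> (d $ i) ^ m / (real m * c $ i)" .
  moreover have "0 < (d $ i) ^ m"
    using assms(1,3) by (simp add: zero_less_power_eq)
  ultimately have "0 \<le> real m * c $ i"
    by (simp add: zero_le_divide_iff)
  moreover have "(\<Sum>t<m. c $ (replicate m i ! t)) \<noteq> 0"
    using assms(4)[rule_format, of "replicate m i"] by (simp add: index_tuples_def)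
  ultimately show ?thesis using assms(2) by (simp add: zero_le_mult_iff)
qed

lemma exists_nontrivial_linear_relation:
  fixes g :: "'j \<Rightarrow> 'i \<Rightarrow> real"
  assumes "finite I" "finite J" "card I < card J"
  shows "\<exists>l. (\<exists>j\<in>J. l j \<noteq> 0) \<and> (\<forall>i\<in>I. (\<Sum>j\<in>J. l j * g j i) = 0)"
  using assms
proof (induction I arbitrary: J g rule: finite_induct)
  case empty
  then show ?case by (intro exI[of _ "\<lambda>_. 1"]) (auto simp: card_gt_0_iff)
next
  case (insert i0 I)
  show ?case
  proof (cases "\<forall>j\<in>J. g j i0 = 0")
    case True
    with insert show ?thesis by auto
  next
    case False
    then obtain j0 where j0: "j0 \<in> J" "g j0 i0 \<noteq> 0" by blast
    define J' where "J' = J - {j0}"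
    \<comment> \<open>Gaussian elimination of the coordinate \<open>i0\<close> using the pivot \<open>j0\<close>.\<close>
    define h where "h j i = g j i - (g j i0 / g j0 i0) * g j0 i" for j i
    have "card I < card J'"
      using insert.prems insert.hyps j0 by (simp add: J'_def)
    with insert.IH[of J' h] insert.prems obtain \<mu> where
      \<mu>: "\<exists>j\<in>J'. \<mu> j \<noteq> 0" "\<forall>i\<in>I. (\<Sum>j\<in>J'. \<mu> j * h j i) = 0"
      by (auto simp: J'_def)
    define l where "l j = (if j = j0 then - (\<Sum>j\<in>J'. \<mu> j * g j i0) / g j0 i0 else \<mu> j)" for j
    have l_sum: "(\<Sum>j\<in>J. l j * g j i) = l j0 * g j0 i + (\<Sum>j\<in>J'. \<mu> j * g j i)" for i
    proof -
      have "(\<Sum>j\<in>J'. l j * g j i) = (\<Sum>j\<in>J'. \<mu> j * g j i)"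
        by (rule sum.cong) (auto simp: l_def J'_def)
      then show ?thesis
        unfolding J'_def using j0 insert.prems by (simp add: sum.remove)
    qed
    have h_sum: "(\<Sum>j\<in>J'. \<mu> j * h j i)
        = (\<Sum>j\<in>J'. \<mu> j * g j i) - (\<Sum>j\<in>J'. \<mu> j * g j i0) / g j0 i0 * g j0 i" for i
      unfolding h_def
      by (simp add: algebra_simps sum_subtractf sum_distrib_left sum_distrib_right sum_divide_distrib)
    have "(\<Sum>j\<in>J. l j * g j i) = 0" if "i \<in> insert i0 I" for i
    proof -
      have "l j0 * g j0 i = - ((\<Sum>j\<in>J'. \<mu> j * g j i0) / g j0 i0 * g j0 i)"
        by (simp add: l_def)
      moreover have "(\<Sum>j\<in>J'. \<mu> j * g j i) = (\<Sum>j\<in>J'. \<mu> j * g j i0) / g j0 i0 * g j0 i"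
        using that \<mu>(2) h_sum[of i] j0(2) by auto
      ultimately show ?thesis using l_sum[of i] by linarith
    qed
    moreover have "\<exists>j\<in>J. l j \<noteq> 0"
      using \<mu>(1) by (auto simp: l_def J'_def)
    ultimately show ?thesis by (intro exI[of _ l]) blast
  qed
qed

lemma conic_combination_reduce_card:
  fixes g :: "'j \<Rightarrow> 'i \<Rightarrow> real"
  assumes "finite I" "finite J" "\<forall>j\<in>J. w j \<ge> 0" "\<forall>i\<in>I. f i = (\<Sum>j\<in>J. w j * g j i)"
  shows "\<exists>J' w'. J' \<subseteq> J \<and> card J' \<le> card I \<and> (\<forall>j\<in>J'. w' j \<ge> 0) \<and>
           (\<forall>i\<in>I. f i = (\<Sum>j\<in>J'. w' j * g j i))"
  using assms(2-4)
proof (induction "card J" arbitrary: J w rule: less_induct)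
  case less
  show ?case
  proof (cases "card J \<le> card I")
    case True
    then show ?thesis using less.prems by blast
  next
    case False
    then obtain l0 where l0: "\<exists>j\<in>J. l0 j \<noteq> 0" "\<forall>i\<in>I. (\<Sum>j\<in>J. l0 j * g j i) = 0"
      using exists_nontrivial_linear_relation[OF assms(1) less.prems(1), of g] by auto
    obtain l where l: "\<exists>j\<in>J. l j > 0" "\<forall>i\<in>I. (\<Sum>j\<in>J. l j * g j i) = 0"
    proof (cases "\<exists>j\<in>J. l0 j > 0")
      case True
      then show ?thesis using that l0 by blast
    next
      case False
      then show ?thesis
        using that[of "\<lambda>j. - l0 j"] l0 by (force simp: sum_negf)
    qed
    \<comment> \<open>Move along \<open>-l\<close> until the first weight hits zero.\<close>
    define P where "P = {j\<in>J. l j > 0}"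
    have P: "finite P" "P \<noteq> {}" using l(1) less.prems(1) by (auto simp: P_def)
    define s where "s = Min ((\<lambda>j. w j / l j) ` P)"
    have "s \<in> (\<lambda>j. w j / l j) ` P"
      unfolding s_def using P by (intro Min_in) auto
    then obtain j0 where j0: "j0 \<in> P" "s = w j0 / l j0" by blast
    have s_le: "s \<le> w j / l j" if "j \<in> P" for j
      unfolding s_def using P that by (intro Min_le) auto
    have "s \<ge> 0" using j0 less.prems(2) by (auto simp: P_def)
    define w2 where "w2 j = w j - s * l j" for j
    have w2_nonneg: "\<forall>j\<in>J. w2 j \<ge> 0"
    proof
      fix j assume j: "j \<in> J"
      show "w2 j \<ge> 0"
      proof (cases "l j > 0")
        case True
        then show ?thesis using s_le[of j] j by (auto simp: w2_def P_def pos_le_divide_eq)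
      next
        case False
        then have "s * l j \<le> 0" using \<open>s \<ge> 0\<close> by (simp add: mult_nonneg_nonpos)
        moreover have "w j \<ge> 0" using less.prems(2) j by blast
        ultimately show ?thesis by (simp add: w2_def)
      qed
    qed
    have "j0 \<in> J" "w2 j0 = 0" using j0 by (auto simp: w2_def P_def)
    have w2_rep: "\<forall>i\<in>I. f i = (\<Sum>j\<in>J - {j0}. w2 j * g j i)"
    proof
      fix i assume i: "i \<in> I"
      have "(\<Sum>j\<in>J. w2 j * g j i) = (\<Sum>j\<in>J. w j * g j i) - s * (\<Sum>j\<in>J. l j * g j i)"
        by (simp add: w2_def algebra_simps sum_subtractf sum_distrib_left)
      then show "f i = (\<Sum>j\<in>J - {j0}. w2 j * g j i)"
        using i l(2) less.prems(1,3) \<open>j0 \<in> J\<close> \<open>w2 j0 = 0\<close> by (simp add: sum.remove)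
    qed
    have "card (J - {j0}) < card J"
      using \<open>j0 \<in> J\<close> less.prems(1) by (meson card_Diff1_less)
    moreover have "finite (J - {j0})" "\<forall>j\<in>J - {j0}. w2 j \<ge> 0"
      using less.prems(1) w2_nonneg by auto
    ultimately have "\<exists>J' w'. J' \<subseteq> J - {j0} \<and> card J' \<le> card I \<and> (\<forall>j\<in>J'. w' j \<ge> 0) \<and>
        (\<forall>i\<in>I. f i = (\<Sum>j\<in>J'. w' j * g j i))"
      using w2_rep by (rule less.hyps)
    then show ?thesis by blast
  qed
qed

lemma conic_combination_rank_one_eq_sum:
  fixes g :: "'j \<Rightarrow> real ^ 'n::finite"
  assumes "m > 0" "finite I" "finite J" "\<forall>j\<in>J. w j \<ge> 0"
  shows "\<exists>V. \<forall>is\<in>I. (\<Sum>j\<in>J. w j * rank_one_tensor m (g j) is)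
                    = (\<Sum>j<card I. rank_one_tensor m (V j) is)"
proof -
  obtain J' w' where J': "J' \<subseteq> J" "card J' \<le> card I" "\<forall>j\<in>J'. w' j \<ge> 0"
      "\<forall>is\<in>I. (\<Sum>j\<in>J. w j * rank_one_tensor m (g j) is) = (\<Sum>j\<in>J'. w' j * rank_one_tensor m (g j) is)"
    using conic_combination_reduce_card[OF assms(2,3,4),
        where f = "\<lambda>is. \<Sum>j\<in>J. w j * rank_one_tensor m (g j) is"
          and g = "\<lambda>j. rank_one_tensor m (g j)"]
    by blast
  have "finite J'" using J'(1) assms(3) by (rule finite_subset)
  then obtain h where h: "bij_betw h {..<card J'} J'"
    using ex_bij_betw_nat_finite[of J'] by (auto simp: atLeast0LessThan)
  \<comment> \<open>The weights are absorbed by the \<open>m\<close>-th roots; missing terms are padded with zero.\<close>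
  define V where "V j = (if j < card J' then root m (w' (h j)) *\<^sub>R g (h j) else 0)" for j
  have "(\<Sum>j\<in>J'. w' j * rank_one_tensor m (g j) is) = (\<Sum>j<card I. rank_one_tensor m (V j) is)"
    for "is"
  proof -
    have "(\<Sum>j\<in>J'. w' j * rank_one_tensor m (g j) is)
        = (\<Sum>j<card J'. w' (h j) * rank_one_tensor m (g (h j)) is)"
      by (rule sum.reindex_bij_betw[OF h, symmetric])
    also have "\<dots> = (\<Sum>j<card J'. rank_one_tensor m (V j) is)"
    proof (rule sum.cong[OF refl])
      fix j assume j: "j \<in> {..<card J'}"
      then have "w' (h j) \<ge> 0" using h J'(3) by (auto simp: bij_betw_def)
      then show "w' (h j) * rank_one_tensor m (g (h j)) is = rank_one_tensor m (V j) is"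
        using j assms(1) by (simp add: V_def rank_one_tensor_scaleR)
    qed
    also have "\<dots> = (\<Sum>j<card I. rank_one_tensor m (V j) is)"
      using J'(2) assms(1) by (intro sum.mono_neutral_left) (auto simp: V_def rank_one_tensor_zero)
    finally show ?thesis .
  qed
  then show ?thesis using J'(4) by auto
qed

lemma abs_le_of_sum_even_powers_le:
  fixes a :: "'j \<Rightarrow> real"
  assumes "even m" "m > 0" "finite J" "j \<in> J" "(\<Sum>j\<in>J. a j ^ m) \<le> K"
  shows "\<bar>a j\<bar> \<le> max 1 K"
proof -
  have "\<bar>a j\<bar> ^ m = a j ^ m"
    using assms(1) by (rule power_even_abs)
  also have "\<dots> \<le> (\<Sum>j\<in>J. a j ^ m)"
    using assms(1,3,4) by (intro member_le_sum) auto
  finally have "\<bar>a j\<bar> ^ m \<le> K"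
    using assms(5) by linarith
  moreover have "\<bar>a j\<bar> \<le> \<bar>a j\<bar> ^ m" if "\<bar>a j\<bar> > 1"
    using that assms(2) by (intro self_le_power) auto
  ultimately show ?thesis by fastforce
qed

lemma bounded_family_convergent_subseq:
  fixes V :: "nat \<Rightarrow> nat \<Rightarrow> 'a::euclidean_space"
  assumes "\<And>M j. j < R \<Longrightarrow> norm (V M j) \<le> B"
  shows "\<exists>\<sigma> W. strict_mono \<sigma> \<and> (\<forall>j<R. (\<lambda>M. V (\<sigma> M) j) \<longlonglongrightarrow> W j)"
  using assms
proof (induction R)
  case 0
  then show ?case by (intro exI[of _ id]) (auto simp: strict_mono_def)
next
  case (Suc R)
  then obtain \<sigma> W where \<sigma>: "strict_mono \<sigma>" "\<forall>j<R. (\<lambda>M. V (\<sigma> M) j) \<longlonglongrightarrow> W j"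
    by auto
  have "bounded (range (\<lambda>M. V (\<sigma> M) R))"
    using Suc.prems[of R] by (auto simp: bounded_iff)
  then obtain l r where r: "strict_mono r" "((\<lambda>M. V (\<sigma> M) R) \<circ> r) \<longlonglongrightarrow> l"
    using bounded_imp_convergent_subsequence by blast
  have "(\<lambda>M. V ((\<sigma> \<circ> r) M) j) \<longlonglongrightarrow> (W(R := l)) j" if "j < Suc R" for j
  proof (cases "j = R")
    case True
    then show ?thesis using r(2) by (simp add: o_def)
  next
    case False
    then have "(\<lambda>M. V (\<sigma> M) j) \<longlonglongrightarrow> W j" using \<sigma>(2) that by simp
    from LIMSEQ_subseq_LIMSEQ[OF this r(1)] False show ?thesis by (simp add: o_def)
  qed
  moreover have "strict_mono (\<sigma> \<circ> r)" using \<sigma>(1) r(1) by (rule strict_mono_o)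
  ultimately show ?case by blast
qed

text \<open>Closedness of the set of sums of \<open>R\<close> rank-one tensors of even order: the diagonal
  entries \<open>\<Sum>\<^sub>j (v\<^sub>j)\<^sub>i\<^sup>m\<close> bound every coordinate of every \<open>v\<^sub>j\<close>.\<close>

lemma completely_decomposable_of_rank_one_sums_tendsto:
  fixes V :: "nat \<Rightarrow> nat \<Rightarrow> real ^ 'n::finite"
  assumes "even m" "m > 0"
    and lim: "\<And>is. is \<in> index_tuples m \<Longrightarrow>
               (\<lambda>M. \<Sum>j<R. rank_one_tensor m (V M j) is) \<longlonglongrightarrow> A is"
  shows "completely_decomposable m A"
proof -
  have "replicate m i \<in> index_tuples m" for i :: 'n
    by (simp add: index_tuples_def)
  then have "Bseq (\<lambda>M. \<Sum>j<R. (V M j $ i) ^ m)" for i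
    using lim[of "replicate m i"] by (intro convergent_imp_Bseq convergentI) simp
  then have "\<forall>i. \<exists>K. \<forall>M. (\<Sum>j<R. (V M j $ i) ^ m) \<le> K"
    unfolding Bseq_def real_norm_def by (meson abs_le_D1)
  then obtain K where K: "\<And>M i. (\<Sum>j<R. (V M j $ i) ^ m) \<le> K i"
    by metis
  have "norm (V M j) \<le> (\<Sum>i\<in>UNIV. max 1 (K i))" if "j < R" for M j
  proof -
    have "norm (V M j) \<le> (\<Sum>i\<in>UNIV. \<bar>V M j $ i\<bar>)"
      by (rule norm_le_l1_cart)
    also have "\<dots> \<le> (\<Sum>i\<in>UNIV. max 1 (K i))"
      using abs_le_of_sum_even_powers_le[OF assms(1,2) _ _ K] that by (intro sum_mono) simp
    finally show ?thesis .
  qed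
  then obtain \<sigma> W where \<sigma>: "strict_mono \<sigma>" "\<forall>j<R. (\<lambda>M. V (\<sigma> M) j) \<longlonglongrightarrow> W j"
    using bounded_family_convergent_subseq by blast
  have "A is = (\<Sum>j<R. rank_one_tensor m (W j) is)" if "is \<in> index_tuples m" for "is"
  proof (rule LIMSEQ_unique)
    show "(\<lambda>M. \<Sum>j<R. rank_one_tensor m (V (\<sigma> M) j) is) \<longlonglongrightarrow> A is"
      using LIMSEQ_subseq_LIMSEQ[OF lim[OF that] \<sigma>(1)] by (simp add: o_def)
    show "(\<lambda>M. \<Sum>j<R. rank_one_tensor m (V (\<sigma> M) j) is) \<longlonglongrightarrow> (\<Sum>j<R. rank_one_tensor m (W j) is)"
      unfolding rank_one_tensor_def using \<sigma>(2)
      by (intro tendsto_sum tendsto_prod tendsto_vec_nth) auto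
  qed
  then show ?thesis
    unfolding completely_decomposable_iff_rank_one
    by (intro exI[of _ "map W [0..<R]"])
       (simp add: interv_sum_list_conv_sum_set_nat atLeast0LessThan o_def)
qed

text \<open>The Riemann sum with step \<open>1/M\<close> over \<open>[0, M]\<close> of \<open>\<integral>\<^sub>0\<^sup>\<infinity> exp (-a s) ds = 1 / a\<close>.\<close>

lemma riemann_sum_exp_tendsto:
  fixes a :: real
  assumes "a > 0"
  shows "(\<lambda>M::nat. (1 / real M) * (\<Sum>k<M\<^sup>2. exp (- (real k * a / real M)))) \<longlonglongrightarrow> 1 / a"
proof -
  define f where "f M = (1 - exp (- a * M)) / (M * (1 - exp (- a / M)))" for M :: real
  have "(f \<longlongrightarrow> inverse a) at_top"
    unfolding f_def using assms by real_asymp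
  then have "(\<lambda>M::nat. f (real M)) \<longlonglongrightarrow> 1 / a"
    by (simp add: filterlim_compose[OF _ filterlim_real_sequentially] inverse_eq_divide)
  moreover have "\<forall>\<^sub>F M in sequentially.
      f (real M) = (1 / real M) * (\<Sum>k<M\<^sup>2. exp (- (real k * a / real M)))"
    using eventually_gt_at_top[of "0::nat"]
  proof eventually_elim
    case (elim M)
    define q where "q = exp (- (a / real M))"
    have "q \<noteq> 1" using assms elim by (simp add: q_def)
    have "(\<Sum>k<M\<^sup>2. exp (- (real k * a / real M))) = (\<Sum>k<M\<^sup>2. q ^ k)"
      by (rule sum.cong) (auto simp: q_def exp_of_nat_mult[symmetric] field_simps)
    also have "\<dots> = (1 - q ^ M\<^sup>2) / (1 - q)"
      using \<open>q \<noteq> 1\<close> by (simp add: sum_gp_strict)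
    also have "q ^ M\<^sup>2 = exp (- a * real M)"
      using elim by (simp add: q_def exp_of_nat_mult[symmetric] power2_eq_square field_simps)
    finally show ?case using elim by (simp add: f_def q_def field_simps)
  qed
  ultimately show ?thesis by (rule Lim_transform_eventually)
qed

lemma completely_decomposable_gen_cauchy_tensor:
  fixes c d :: "real ^ 'n::finite"
  assumes "even m" "m > 0" and "\<forall>i. c $ i > 0"
  shows "completely_decomposable m (gen_cauchy_tensor c d)"
proof -
  define e where "e M k = (\<chi> i. d $ i * exp (- (real k * c $ i / real M)))" for M k :: nat
  define R where "R = card (index_tuples m :: 'n list set)"
  define S where "S M is = (\<Sum>k<M\<^sup>2. (1 / real M) * rank_one_tensor m (e M k) is)" for M "is"
  have S_tendsto: "(\<lambda>M. S M is) \<longlonglongrightarrow> gen_cauchy_tensor c d is" if "is \<in> index_tuples m" for "is"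
  proof -
    define a where "a = (\<Sum>t<m. c $ (is ! t))"
    have "a > 0" unfolding a_def using assms(2,3) by (intro sum_pos) auto
    have "rank_one_tensor m (e M k) is = rank_one_tensor m d is * exp (- (real k * a / real M))"
      for M k
      by (simp add: rank_one_tensor_def e_def a_def prod.distrib exp_sum[symmetric]
          sum_distrib_left sum_divide_distrib sum_negf)
    then have S_eq: "S M is = rank_one_tensor m d is * ((1 / real M) * (\<Sum>k<M\<^sup>2. exp (- (real k * a / real M))))"
      for M
      by (simp add: S_def sum_distrib_left)
    have gen_eq: "gen_cauchy_tensor c d is = rank_one_tensor m d is * (1 / a)"
      using that by (simp add: gen_cauchy_tensor_def rank_one_tensor_def index_tuples_def a_def)
    show ?thesis
      unfolding S_eq gen_eq by (intro tendsto_mult_left riemann_sum_exp_tendsto \<open>a > 0\<close>)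
  qed
  have "\<exists>V. \<forall>is\<in>index_tuples m. S M is = (\<Sum>j<R. rank_one_tensor m (V j) is)"
    for M
  proof -
    have "\<forall>k\<in>{..<M\<^sup>2}. 0 \<le> 1 / real M" by simp
    from conic_combination_rank_one_eq_sum[OF assms(2) finite_index_tuples[of m] finite_lessThan this,
        where g = "e M"]
    show ?thesis unfolding S_def R_def by blast
  qed
  then have "\<exists>V. \<forall>M. \<forall>is\<in>index_tuples m.
      S M is = (\<Sum>j<R. rank_one_tensor m (V M j) is)"
    by (intro choice allI)
  then obtain V where
    "\<And>M is. is \<in> index_tuples m \<Longrightarrow> S M is = (\<Sum>j<R. rank_one_tensor m (V M j) is)"
    by blast
  with S_tendsto show ?thesis
    by (intro completely_decomposable_of_rank_one_sums_tendsto[OF assms(1,2)]) auto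
qed

theorem theorem3p1:
  fixes c d :: "real ^ 'n" and m :: nat
  assumes "even m" and "m \<ge> 2" and "CARD('n) \<ge> 2"
    and "\<forall>i. d $ i \<noteq> 0"
    and "\<forall>is\<in>index_tuples m. (\<Sum>t<m. c $ (is ! t)) \<noteq> 0"
  shows "(completely_decomposable m (gen_cauchy_tensor c d) \<longleftrightarrow> sos_tensor m (gen_cauchy_tensor c d))
       \<and> (sos_tensor m (gen_cauchy_tensor c d) \<longleftrightarrow> psd_tensor m (gen_cauchy_tensor c d))
       \<and> (psd_tensor m (gen_cauchy_tensor c d) \<longleftrightarrow> (\<forall>i. c $ i > 0))"
proof -
  have "m > 0" using assms(2) by simp
  have "completely_decomposable m (gen_cauchy_tensor c d) \<Longrightarrow> sos_tensor m (gen_cauchy_tensor c d)"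
    using completely_decomposable_imp_sos_tensor[OF assms(1) symmetric_gen_cauchy_tensor] .
  moreover have "sos_tensor m (gen_cauchy_tensor c d) \<Longrightarrow> psd_tensor m (gen_cauchy_tensor c d)"
    by (rule sos_tensor_imp_psd_tensor)
  moreover have "psd_tensor m (gen_cauchy_tensor c d) \<Longrightarrow> \<forall>i. c $ i > 0"
    using psd_gen_cauchy_tensor_imp_pos[OF assms(1) \<open>m > 0\<close>] assms(4,5) by blast
  moreover have "\<forall>i. c $ i > 0 \<Longrightarrow> completely_decomposable m (gen_cauchy_tensor c d)"
    using completely_decomposable_gen_cauchy_tensor[OF assms(1) \<open>m > 0\<close>] .
  ultimately show ?thesis by blast
qed

end
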